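(* Let $\ell>0$. For any constant $C_0>0$ and any $\mu_0\in(0,\ell)$ there is some $\mu\in(0,\mu_0)$ such that, with $$\alpha:=\frac{\sqrt\ell-\sqrt\mu}{\sqrt\ell+\sqrt\mu},\qquad q(z)=\ell(z-\alpha)(z-1),\qquad r(z)=-(1+\alpha)z+\alpha,$$ one has $\sup_{\nu\in[\mu,\ell]}\rho\big(q(z)-\nu\, r(z)\big)<1-C_0\mu$.
   Context: For a polynomial $s(z)$, $\rho(s)$ denotes the maximum modulus of a (complex) root of $s$. *)

theory Defs
  imports "HOL-Analysis.Analysis" "HOL-Computational_Algebra.Polynomial"
begin

text \<open>rho(s): the maximum modulus of a complex root of the polynomial s
  (taken as 0 if s has no roots; only meaningful for nonzero s).\<close>
definition root_radius :: "complex poly \<Rightarrow> real" where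
  "root_radius s = (if {z. poly s z = 0} = {} then 0 else Max (norm ` {z. poly s z = 0}))"

end

theory Submission
  imports Defs
begin

text \<open>The polynomials q - nu r depend affinely on nu, and the choice of alpha makes them
  equal to l z^2 at nu = l and to l (z - rho)^2 at nu = mu, where rho = 1 - sqrt (mu / l).
  Hence every member of the family is l ((1 - t) z^2 + t (z - rho)^2) with t in [0, 1]: a real
  quadratic with nonpositive discriminant, whose roots have modulus sqrt t * rho \<le> rho.
  Finally rho < 1 - C0 mu as soon as C0 sqrt (mu l) < 1, which holds for small mu.\<close>

lemma norm_power2_root_quadratic:
  fixes b c :: real and z :: complex
  assumes disc: "b^2 \<le> 4 * c" and root: "z^2 - of_real b * z + of_real c = 0"
  shows "norm z ^ 2 = c"
proof -
  obtain x y where z: "z = Complex x y" by (cases z)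
  have re: "x^2 - y^2 - b * x + c = 0" and im: "(2 * x - b) * y = 0"
    using arg_cong[OF root, of Re] arg_cong[OF root, of Im]
    by (simp_all add: z power2_eq_square algebra_simps)
  have "b = 2 * x"
  proof (cases "y = 0")
    case True
    then have "(2 * x - b)^2 = b^2 - 4 * c" using re by (simp add: power2_eq_square algebra_simps)
    then have "(2 * x - b)^2 \<le> 0" using disc by linarith
    then show ?thesis by simp
  next
    case False
    then show ?thesis using im by simp
  qed
  then have "c = x^2 + y^2" using re by (simp add: power2_eq_square)
  then show ?thesis by (simp add: z cmod_power2)
qed

lemma root_radius_le:
  assumes "p \<noteq> 0" "0 \<le> B" "\<And>z. poly p z = 0 \<Longrightarrow> norm z \<le> B"
  shows "root_radius p \<le> B"
  using assms poly_roots_finite[OF assms(1)] by (auto simp: root_radius_def Max_le_iff)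

lemma norm_root_convex_combination_le:
  fixes t rho :: real and z :: complex
  assumes t: "0 \<le> t" "t \<le> 1" and "0 \<le> rho"
    and root: "of_real (1 - t) * z^2 + of_real t * (z - of_real rho)^2 = 0"
  shows "norm z \<le> rho"
proof -
  have "z^2 - of_real (2 * t * rho) * z + of_real (t * rho^2) = 0"
    using root by (simp add: power2_eq_square algebra_simps)
  moreover have "(2 * t * rho)^2 \<le> 4 * (t * rho^2)"
  proof -
    have "t^2 \<le> t" using t by (simp add: power2_eq_square mult_left_le_one_le)
    then have "t^2 * rho^2 \<le> t * rho^2" by (rule mult_right_mono) simp
    then show ?thesis by (simp add: power_mult_distrib)
  qed
  ultimately have "norm z ^ 2 = t * rho^2"
    by (intro norm_power2_root_quadratic)
  also have "\<dots> \<le> rho^2" using t by (simp add: mult_left_le_one_le)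
  finally show ?thesis using \<open>0 \<le> rho\<close> by (rule power2_le_imp_le)
qed

lemma root_radius_q_minus_smult_r_le:
  fixes l mu nu :: real
  assumes mu: "0 < mu" "mu < l" and nu: "mu \<le> nu" "nu \<le> l"
  defines "alpha \<equiv> (sqrt l - sqrt mu) / (sqrt l + sqrt mu)"
  shows "root_radius (smult (complex_of_real l) ([:- complex_of_real alpha, 1:] * [:-1, 1:])
      - smult (complex_of_real nu) [:complex_of_real alpha, - complex_of_real (1 + alpha):])
    \<le> 1 - sqrt (mu / l)"
    (is "root_radius ?p \<le> _")
proof -
  define sl sm where "sl = sqrt l" and "sm = sqrt mu"
  have l_eq: "l = sl^2" and mu_eq: "mu = sm^2" and sm: "0 < sm" "sm < sl"
    using mu by (simp_all add: sl_def sm_def)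
  have alpha: "alpha = (sl - sm) / (sl + sm)" by (simp add: alpha_def sl_def sm_def)
  define rho where "rho = 1 - sqrt (mu / l)"
  have rho: "rho = (sl - sm) / sl" using sm by (simp add: rho_def sl_def sm_def real_sqrt_divide field_simps)
  have "0 \<le> rho" using sm by (simp add: rho)
  define t where "t = (l - nu) / (l - mu)"
  have t: "0 \<le> t" "t \<le> 1" using mu nu by (simp_all add: t_def)
  have linear: "(l - mu) * (1 + alpha) = 2 * l * rho" and const: "(l - mu) * alpha = l * rho^2"
    using sm by (simp_all add: alpha rho l_eq mu_eq field_simps power2_eq_square)
  have "l - nu = t * (l - mu)" using mu by (simp add: t_def)
  then have coeffs: "(l - nu) * (1 + alpha) = 2 * l * t * rho" "(l - nu) * alpha = l * t * rho^2"
    by (simp_all only: mult.assoc linear const) (simp_all add: ac_simps)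
  have poly_p: "poly ?p z = of_real l * z^2 - of_real ((l - nu) * (1 + alpha)) * z
      + of_real ((l - nu) * alpha)" for z
    by (simp add: algebra_simps power2_eq_square)
  then have "poly ?p 1 = of_real nu"
    by (simp add: algebra_simps)
  then have nonzero: "?p \<noteq> 0" using mu nu by auto
  have roots: "norm z \<le> rho" if "poly ?p z = 0" for z
  proof (rule norm_root_convex_combination_le[OF t \<open>0 \<le> rho\<close>])
    have "of_real l * (of_real (1 - t) * z^2 + of_real t * (z - of_real rho)^2) = poly ?p z"
      unfolding poly_p coeffs by (simp add: algebra_simps power2_eq_square)
    then show "of_real (1 - t) * z^2 + of_real t * (z - of_real rho)^2 = 0"
      using that mu by simp
  qed
  show ?thesis unfolding rho_def[symmetric] by (rule root_radius_le[OF nonzero \<open>0 \<le> rho\<close> roots])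
qed

lemma exists_pos_lt_sqrt_divide:
  fixes l C mu0 :: real
  assumes "0 < l" "0 < C" "0 < mu0"
  shows "\<exists>mu. 0 < mu \<and> mu < mu0 \<and> C * mu < sqrt (mu / l)"
proof -
  define mu where "mu = min (mu0 / 2) (1 / (2 * C^2 * l))"
  have mu: "0 < mu" "mu < mu0" using assms by (simp_all add: mu_def)
  have "C^2 * l * mu \<le> C^2 * l * (1 / (2 * C^2 * l))"
    using assms by (intro mult_left_mono) (simp_all add: mu_def)
  then have "C^2 * l * mu < 1" using assms by simp
  then have "(C * mu)^2 < mu / l"
    using assms mu by (simp add: field_simps power2_eq_square)
  then show ?thesis using mu by (blast intro: real_less_rsqrt)
qed

theorem proposition9:
  fixes l C0 mu0 :: real
  assumes "l > 0" and "C0 > 0" and "0 < mu0" and "mu0 < l"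
  shows "\<exists>mu. 0 < mu \<and> mu < mu0 \<and>
    (let alpha = (sqrt l - sqrt mu) / (sqrt l + sqrt mu);
         q = smult (complex_of_real l) ([:- complex_of_real alpha, 1:] * [:-1, 1:]);
         r = [:complex_of_real alpha, - complex_of_real (1 + alpha):]
     in (SUP nu\<in>{mu..l}. root_radius (q - smult (complex_of_real nu) r)) < 1 - C0 * mu)"
proof -
  obtain mu where mu: "0 < mu" "mu < mu0" and gap: "C0 * mu < sqrt (mu / l)"
    using exists_pos_lt_sqrt_divide assms by blast
  then have "mu < l" using assms by simp
  let ?alpha = "(sqrt l - sqrt mu) / (sqrt l + sqrt mu)"
  have "(SUP nu\<in>{mu..l}. root_radius (smult (complex_of_real l) ([:- complex_of_real ?alpha, 1:] * [:-1, 1:])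
      - smult (complex_of_real nu) [:complex_of_real ?alpha, - complex_of_real (1 + ?alpha):]))
    \<le> 1 - sqrt (mu / l)"
    by (intro cSUP_least root_radius_q_minus_smult_r_le) (use \<open>mu < l\<close> mu in auto)
  then show ?thesis using mu gap unfolding Let_def by (intro exI[of _ mu]) auto
qed

end
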